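(* Assume the standing assumptions in the context. Let $v=(v_1,v_2)$ be the bounded constrained viscosity solution on $[\underline{x},+\infty)$ of the system $$\rho v_j(x)=H(x,y_j,Dv_j(x))+\lambda_j\big(v_{\bar\jmath}(x)-v_j(x)\big),\qquad j=1,2,\ \bar\jmath=3-j,$$ and assume each $v_j$ is concave. Then $v_j$ is $C^1$ on $(\underline{x},+\infty)$. In particular, defining $Dv_j(\underline{x})=\lim_{\epsilon\to0^+}\frac{v_j(\underline{x}+\epsilon)-v_j(\underline{x})}{\epsilon}$, the function $Dv_j$ is uniformly continuous on $[\underline{x},R]$ for every constant $R>\underline{x}$.
   Context: Standing assumptions: $\rho>0$; $-\infty<r<\rho$; $0<y_1<y_2$; $\gamma>1$; $\underline{x}\le0$ with $\rho\underline{x}+y_j>0$ for $j=1,2$; $\lambda_1,\lambda_2\ge0$ constants. Utility $u(c)=\frac{c^{1-\gamma}}{1-\gamma}$; Hamiltonian $H(x,y_j,p)=\sup_{c\ge0}\{u(c)+(rx+y_j-c)p\}$, equal to $(rx+y_j)p+\frac{\gamma}{1-\gamma}p^{1-1/\gamma}$ for $p\ge0$ and $+\infty$ for $p<0$. Viscosity subsolution on $S\subseteq[\underline{x},\infty)$: u.s.c. pair $v$ such that whenever $\varphi$ smooth, $j\in\{1,2\}$, and $v_j-\varphi$ has a local max (relative to $[\underline{x},\infty)$) at $x_0\in S$, then $\rho v_j(x_0)\le H(x_0,y_j,D\varphi(x_0))+\lambda_j(v_{\bar\jmath}(x_0)-v_j(x_0))$. Viscosity supersolution on $S$: l.s.c.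 pair with the reverse inequality at local minima $x_0\in S$. A constrained viscosity solution is a continuous pair that is a viscosity supersolution on $(\underline{x},\infty)$ and a viscosity subsolution on $[\underline{x},\infty)$. *)

theory Defs
  imports "HOL-Analysis.Analysis"
begin

definition util :: "real \<Rightarrow> real \<Rightarrow> real" where
  "util \<gamma> c = c powr (1 - \<gamma>) / (1 - \<gamma>)"

text \<open>Hamiltonian H(x,y,p) = sup_{c>=0} (u c + (r x + y - c) p), in closed form,
  with value +infinity for p < 0.\<close>
definition Ham :: "real \<Rightarrow> real \<Rightarrow> real \<Rightarrow> real \<Rightarrow> real \<Rightarrow> ereal" where
  "Ham r \<gamma> x y p =
     (if p \<ge> 0 then ereal ((r * x + y) * p + \<gamma> / (1 - \<gamma>) * p powr (1 - 1 / \<gamma>)) else \<infinity>)"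

definition smooth_fun :: "(real \<Rightarrow> real) \<Rightarrow> bool" where
  "smooth_fun \<phi> \<longleftrightarrow> (\<forall>n x. ((deriv ^^ n) \<phi>) differentiable (at x))"

definition loc_max_rel :: "real \<Rightarrow> (real \<Rightarrow> real) \<Rightarrow> real \<Rightarrow> bool" where
  "loc_max_rel xl f x0 \<longleftrightarrow> (\<exists>\<delta>>0. \<forall>x\<in>{xl..}. \<bar>x - x0\<bar> < \<delta> \<longrightarrow> f x \<le> f x0)"

definition loc_min_rel :: "real \<Rightarrow> (real \<Rightarrow> real) \<Rightarrow> real \<Rightarrow> bool" where
  "loc_min_rel xl f x0 \<longleftrightarrow> (\<exists>\<delta>>0. \<forall>x\<in>{xl..}. \<bar>x - x0\<bar> < \<delta> \<longrightarrow> f x \<ge> f x0)"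

definition usc_on :: "real set \<Rightarrow> (real \<Rightarrow> real) \<Rightarrow> bool" where
  "usc_on A f \<longleftrightarrow> (\<forall>x0\<in>A. \<forall>e>0. \<exists>\<delta>>0. \<forall>x\<in>A. \<bar>x - x0\<bar> < \<delta> \<longrightarrow> f x < f x0 + e)"

definition lsc_on :: "real set \<Rightarrow> (real \<Rightarrow> real) \<Rightarrow> bool" where
  "lsc_on A f \<longleftrightarrow> (\<forall>x0\<in>A. \<forall>e>0. \<exists>\<delta>>0. \<forall>x\<in>A. \<bar>x - x0\<bar> < \<delta> \<longrightarrow> f x > f x0 - e)"

text \<open>Pair v = (v 1, v 2); y j and lam j are the incomes and switching intensities;
  the other index is 3 - j. Semicontinuity is on the whole domain [xl, infinity).\<close>
definition visc_sub ::
  "real \<Rightarrow> real \<Rightarrow> real \<Rightarrow> (nat \<Rightarrow> real) \<Rightarrow> (nat \<Rightarrow> real) \<Rightarrow> real \<Rightarrow> real set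
   \<Rightarrow> (nat \<Rightarrow> real \<Rightarrow> real) \<Rightarrow> bool" where
  "visc_sub \<rho> r \<gamma> y lam xl S v \<longleftrightarrow>
     (\<forall>j\<in>{1,2}. usc_on {xl..} (v j)) \<and>
     (\<forall>\<phi> j x0. smooth_fun \<phi> \<and> j \<in> {1,2} \<and> x0 \<in> S \<and> loc_max_rel xl (\<lambda>x. v j x - \<phi> x) x0 \<longrightarrow>
        ereal (\<rho> * v j x0) \<le> Ham r \<gamma> x0 (y j) (deriv \<phi> x0) + ereal (lam j * (v (3 - j) x0 - v j x0)))"

definition visc_super ::
  "real \<Rightarrow> real \<Rightarrow> real \<Rightarrow> (nat \<Rightarrow> real) \<Rightarrow> (nat \<Rightarrow> real) \<Rightarrow> real \<Rightarrow> real set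
   \<Rightarrow> (nat \<Rightarrow> real \<Rightarrow> real) \<Rightarrow> bool" where
  "visc_super \<rho> r \<gamma> y lam xl S v \<longleftrightarrow>
     (\<forall>j\<in>{1,2}. lsc_on {xl..} (v j)) \<and>
     (\<forall>\<phi> j x0. smooth_fun \<phi> \<and> j \<in> {1,2} \<and> x0 \<in> S \<and> loc_min_rel xl (\<lambda>x. v j x - \<phi> x) x0 \<longrightarrow>
        ereal (\<rho> * v j x0) \<ge> Ham r \<gamma> x0 (y j) (deriv \<phi> x0) + ereal (lam j * (v (3 - j) x0 - v j x0)))"

definition constrained_visc_sol ::
  "real \<Rightarrow> real \<Rightarrow> real \<Rightarrow> (nat \<Rightarrow> real) \<Rightarrow> (nat \<Rightarrow> real) \<Rightarrow> real
   \<Rightarrow> (nat \<Rightarrow> real \<Rightarrow> real) \<Rightarrow> bool" where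
  "constrained_visc_sol \<rho> r \<gamma> y lam xl v \<longleftrightarrow>
     (\<forall>j\<in>{1,2}. continuous_on {xl..} (v j)) \<and>
     visc_super \<rho> r \<gamma> y lam xl {xl<..} v \<and>
     visc_sub \<rho> r \<gamma> y lam xl {xl..} v"

end

theory Submission
  imports Defs "HOL-Real_Asymp.Real_Asymp"
begin

text \<open>
  A concave function has at every interior point one-sided derivatives \<open>D\<^sup>+v \<le> D\<^sup>-v\<close>,
  and \<open>[D\<^sup>+v, D\<^sup>-v]\<close> is its superdifferential; so the subsolution inequality
  gives \<open>G(x, p) \<ge> 0\<close> at every \<open>p\<close> in between, where \<open>G(x, p)\<close> is the
  residual \<open>H(x, y\<^sub>j, p) + \<lambda>\<^sub>j (v\<^sub>\<jmath> - v\<^sub>j) - \<rho> v\<^sub>j\<close>. Subtracting a strongly concave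
  quadratic from \<open>v\<close> on any small interval produces an interior minimum, i.e. a point where
  a quadratic touches \<open>v\<close> from below; there \<open>v\<close> is differentiable and the supersolution
  inequality gives \<open>G(x, v'(x)) \<le> 0\<close>. Since \<open>D\<^sup>+v\<close> is right continuous and tends
  to \<open>D\<^sup>-v\<close> from the left, this passes to \<open>G(x, D\<^sup>+v) \<le> 0\<close> and \<open>G(x, D\<^sup>-v) \<le> 0\<close>.
  But \<open>G\<close> is strictly convex in \<open>p\<close> (the term \<open>\<gamma>/(1-\<gamma>) p\<^bsup>1-1/\<gamma>\<^esup>\<close> is), so at a
  kink the midpoint would give \<open>G < 0\<close>. Hence \<open>v\<close> is differentiable and \<open>v' = D\<^sup>+v\<close>
  is continuous. At the boundary, \<open>r x + y\<^sub>j > 0\<close> makes \<open>G(x, p)\<close> positive for large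
  \<open>p\<close>, which bounds \<open>v'\<close> near \<open>x\<^sub>l\<close>, so the right derivative at \<open>x\<^sub>l\<close> is finite and
  \<open>v'\<close> extends continuously to \<open>[x\<^sub>l, R]\<close>.
\<close>

lemma powr_midpoint_strict:
  fixes a b \<alpha> :: real
  assumes "0 \<le> a" "a < b" "0 < \<alpha>" "\<alpha> < 1"
  shows "a powr \<alpha> + b powr \<alpha> < 2 * ((a + b) / 2) powr \<alpha>"
proof -
  define m where "m = (a + b) / 2"
  define h where "h t = (m + t) powr \<alpha> + (m - t) powr \<alpha>" for t
  have "h (m - a) < h 0"
  proof (rule DERIV_neg_imp_decreasing_open[of 0 "m - a" h])
    show "0 < m - a" using assms by (simp add: m_def)
  next
    fix t assume t: "0 < t" "t < m - a"
    have "(h has_real_derivative \<alpha> * (m + t) powr (\<alpha> - 1) - \<alpha> * (m - t) powr (\<alpha> - 1)) (at t)"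
      unfolding h_def using t assms by (auto intro!: derivative_eq_intros)
    moreover have "(m + t) powr (\<alpha> - 1) < (m - t) powr (\<alpha> - 1)"
      using t assms by (intro powr_less_mono2_neg) auto
    ultimately show "\<exists>y. (h has_real_derivative y) (at t) \<and> y < 0"
      using assms by (intro exI conjI) auto
  next
    show "continuous_on {0..m - a} h"
      unfolding h_def using assms
      by (intro continuous_intros continuous_on_powr') (auto simp: m_def)
  qed
  moreover have "m + (m - a) = b" "m - (m - a) = a" by (simp_all add: m_def field_simps)
  ultimately show ?thesis by (simp add: h_def m_def add.commute)
qed

lemma exists_quadratic_touching_below:
  fixes f :: "real \<Rightarrow> real"
  assumes "continuous_on {c..d} f" "c < d"
  obtains x1 B C where "c < x1" "x1 < d"
    "\<And>x. x \<in> {c..d} \<Longrightarrow> f x1 - (B * x1 + C * x1\<^sup>2) \<le> f x - (B * x + C * x\<^sup>2)"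
proof -
  define m where "m = (c + d) / 2"
  define S where "S = (f d - f c) / (d - c)"
  define w where "w = \<bar>f m - f c - S * (m - c)\<bar> + 1"
  define K where "K = 4 * w / (d - c)\<^sup>2"
  define h where "h x = f x - (f c + S * (x - c) + K * (x - c) * (d - x))" for x
  \<comment> \<open>\<open>h\<close> vanishes at \<open>c\<close> and \<open>d\<close>, and \<open>K\<close> makes \<open>h m < 0\<close>,
      so \<open>h\<close> has an interior minimum\<close>
  have "continuous_on {c..d} h"
    unfolding h_def by (intro continuous_intros assms)
  then obtain x1 where x1: "x1 \<in> {c..d}" "\<And>x. x \<in> {c..d} \<Longrightarrow> h x1 \<le> h x"
    using continuous_attains_inf[of "{c..d}" h] assms by auto
  have "(m - c) * (d - m) = (d - c)\<^sup>2 / 4"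
    by (simp add: m_def power2_eq_square field_simps)
  then have "K * (m - c) * (d - m) = K * ((d - c)\<^sup>2 / 4)"
    by (simp only: mult.assoc)
  also have "\<dots> = w" using assms by (simp add: K_def)
  finally have "K * (m - c) * (d - m) = w" .
  then have "h m < 0" by (simp add: h_def w_def)
  moreover have "m \<in> {c..d}" using assms by (simp add: m_def)
  ultimately have "h x1 < 0" using x1(2) by force
  moreover have "h c = 0" "h d = 0" using assms by (simp_all add: h_def S_def)
  ultimately have "c < x1" "x1 < d" using x1(1) by (auto simp: order.order_iff_strict)
  moreover have "f x - ((S + K * (c + d)) * x + (- K) * x\<^sup>2) = h x + (f c - S * c - K * c * d)" for x
    by (simp add: h_def algebra_simps power2_eq_square)
  ultimately show ?thesis using that[of x1 "S + K * (c + d)" "- K"] x1 by simp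
qed

lemma deriv_quadratic: "deriv (\<lambda>x::real. A + B * x + C * x\<^sup>2) = (\<lambda>x. B + 2 * C * x)"
  by (intro ext DERIV_imp_deriv) (auto intro!: derivative_eq_intros)

lemma smooth_fun_quadratic: "smooth_fun (\<lambda>x::real. A + B * x + C * x\<^sup>2)"
proof -
  have "\<exists>A' B' C'. (deriv ^^ n) (\<lambda>x::real. A + B * x + C * x\<^sup>2) = (\<lambda>x. A' + B' * x + C' * x\<^sup>2)"
    for n
  proof (induction n arbitrary: A B C)
    case (Suc n)
    have "deriv (\<lambda>x::real. A + B * x + C * x\<^sup>2) = (\<lambda>x. B + (2 * C) * x + 0 * x\<^sup>2)"
      by (simp add: deriv_quadratic)
    then show ?case using Suc.IH[of B "2 * C" 0] by (simp add: funpow_Suc_right del: funpow.simps)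
  qed auto
  moreover have "(\<lambda>x::real. A + B * x + C * x\<^sup>2) differentiable (at x)" for A B C x
    by (auto intro!: derivative_eq_intros simp: real_differentiable_def)
  ultimately show ?thesis
    unfolding smooth_fun_def by metis
qed

locale concave_halfline =
  fixes a :: real and f :: "real \<Rightarrow> real"
  assumes concave: "concave_on {a..} f"
    and continuous: "continuous_on {a..} f"
    and bounded: "bounded (f ` {a..})"
begin

definition slope :: "real \<Rightarrow> real \<Rightarrow> real" where
  "slope x y = (f y - f x) / (y - x)"

lemma slope_commute: "slope x y = slope y x"
  unfolding slope_def by (metis minus_diff_eq minus_divide_divide)

lemma slope_decreasing:
  assumes "a \<le> x" "x < y" "y < z"
  shows "slope x z \<le> slope x y" "slope y z \<le> slope x z"
proof -
  have "convex_on {a..} (\<lambda>x. - f x)" using concave by (simp add: concave_on_def)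
  from convex_on_slope_le[OF this, of x z y] assms
  show "slope x z \<le> slope x y" "slope y z \<le> slope x z"
    by (simp_all add: slope_def divide_simps) argo+
qed

lemma nondecreasing: assumes "a \<le> x" "x < y" shows "f x \<le> f y"
proof (rule ccontr)
  assume "\<not> f x \<le> f y"
  then have neg: "slope x y < 0" unfolding slope_def using assms by (simp add: divide_neg_pos)
  obtain M where M: "\<And>z. a \<le> z \<Longrightarrow> \<bar>f z\<bar> \<le> M"
    using bounded unfolding bounded_iff by (auto simp: real_norm_def)
  define z where "z = y + (2 * M + 1) / - slope x y"
  have "0 \<le> M" using M[of x] assms by simp
  then have "0 < (2 * M + 1) / - slope x y" using neg by (intro divide_pos_pos) auto
  then have "y < z" unfolding z_def by simp
  then have "f z - f x \<le> slope x y * (z - x)"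
    using slope_decreasing(1)[OF assms \<open>y < z\<close>] assms by (simp add: slope_def divide_le_eq)
  also have "\<dots> \<le> slope x y * (z - y)" using neg assms by (simp add: mult_left_mono_neg)
  also have "\<dots> = - (2 * M + 1)" unfolding z_def using neg by (simp add: field_simps)
  finally show False using M[of x] M[of z] assms \<open>y < z\<close> by linarith
qed

lemma slope_nonneg: "a \<le> x \<Longrightarrow> x < y \<Longrightarrow> 0 \<le> slope x y"
  using nondecreasing[of x y] by (simp add: slope_def)

text \<open>
  \<open>rderiv x\<close> is the right derivative only if these slopes are bounded above, which holds
  for \<open>x > a\<close> (\<open>bdd_above_slopes\<close>) but must be proved separately at \<open>x = a\<close>;
  otherwise \<open>Sup\<close> returns an unspecified value.
\<close>
definition rderiv :: "real \<Rightarrow> real" where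
  "rderiv x = Sup (slope x ` {x<..})"

definition lderiv :: "real \<Rightarrow> real" where
  "lderiv x = Inf ((\<lambda>t. slope t x) ` {a..<x})"

lemma bdd_above_slopes: "a < x \<Longrightarrow> bdd_above (slope x ` {x<..})"
  using slope_decreasing[of a x] by (intro bdd_aboveI2[where M = "slope a x"]) force

lemma slope_le_rderiv: "bdd_above (slope x ` {x<..}) \<Longrightarrow> x < t \<Longrightarrow> slope x t \<le> rderiv x"
  unfolding rderiv_def by (rule cSup_upper) auto

lemma bdd_below_slopes: "bdd_below ((\<lambda>t. slope t x) ` {a..<x})"
  by (intro bdd_belowI2[where m = 0]) (simp add: slope_nonneg)

lemma lderiv_le_slope: "a \<le> t \<Longrightarrow> t < x \<Longrightarrow> lderiv x \<le> slope t x"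
  unfolding lderiv_def by (rule cInf_lower) (auto intro: bdd_below_slopes)

lemma rderiv_nonneg: "bdd_above (slope x ` {x<..}) \<Longrightarrow> a \<le> x \<Longrightarrow> 0 \<le> rderiv x"
  using slope_le_rderiv[of x "x + 1"] slope_nonneg[of x "x + 1"] by simp

lemma rderiv_le_lderiv: assumes "a < x" shows "rderiv x \<le> lderiv x"
proof -
  have "slope x u \<le> slope t x" if "a \<le> t" "t < x" "x < u" for t u
    using slope_decreasing[of t x u] that by simp
  then show ?thesis
    unfolding rderiv_def lderiv_def using assms by (intro cSup_least cInf_greatest) auto
qed

lemma lderiv_le_rderiv:
  "bdd_above (slope x ` {x<..}) \<Longrightarrow> a \<le> x \<Longrightarrow> x < y \<Longrightarrow> lderiv y \<le> rderiv x"
  using lderiv_le_slope[of x y] slope_le_rderiv[of x y] by simp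

lemma rderiv_antimono:
  "bdd_above (slope x ` {x<..}) \<Longrightarrow> a \<le> x \<Longrightarrow> x < y \<Longrightarrow> rderiv y \<le> rderiv x"
  using rderiv_le_lderiv[of y] lderiv_le_rderiv[of x y] by simp

lemma tendsto_slope_rderiv:
  assumes "bdd_above (slope x ` {x<..})" "a \<le> x"
  shows "(slope x \<longlongrightarrow> rderiv x) (at_right x)"
proof (rule order_tendstoI)
  fix c assume "c < rderiv x"
  then obtain t where t: "x < t" "c < slope x t"
    using less_cSup_iff[OF _ assms(1)] unfolding rderiv_def by auto
  then show "\<forall>\<^sub>F u in at_right x. c < slope x u"
    unfolding eventually_at_right_field
    using slope_decreasing(1)[of x _ t] assms(2) by (intro exI[of _ t]) force
next
  fix c assume "rderiv x < c"
  then show "\<forall>\<^sub>F u in at_right x. slope x u < c"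
    using slope_le_rderiv[OF assms(1)] unfolding eventually_at_right_field
    by (intro exI[of _ "x + 1"]) force
qed

lemma tendsto_slope_lderiv:
  assumes "a < x"
  shows "((\<lambda>t. slope t x) \<longlongrightarrow> lderiv x) (at_left x)"
proof (rule order_tendstoI)
  fix c assume "c < lderiv x"
  then show "\<forall>\<^sub>F u in at_left x. c < slope u x"
    using lderiv_le_slope assms unfolding eventually_at_left_field
    by (intro exI[of _ a]) (auto intro: less_le_trans)
next
  fix c assume "lderiv x < c"
  then obtain t where t: "a \<le> t" "t < x" "slope t x < c"
    using cInf_less_iff[OF _ bdd_below_slopes] assms unfolding lderiv_def by auto
  then show "\<forall>\<^sub>F u in at_left x. slope u x < c"
    unfolding eventually_at_left_field
    using slope_decreasing(2)[of t _ x] by (intro exI[of _ t]) force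
qed

lemma has_real_derivative_rderiv:
  assumes "a < x" "rderiv x = lderiv x"
  shows "(f has_real_derivative rderiv x) (at x)"
proof -
  have "(slope x \<longlongrightarrow> rderiv x) (at_right x)"
    using tendsto_slope_rderiv[OF bdd_above_slopes] assms(1) by simp
  moreover have "slope x = (\<lambda>t. slope t x)" by (rule ext) (rule slope_commute)
  then have "(slope x \<longlongrightarrow> rderiv x) (at_left x)"
    using tendsto_slope_lderiv assms by simp
  ultimately have "(slope x \<longlongrightarrow> rderiv x) (at x)"
    by (simp add: filterlim_at_split)
  then show ?thesis unfolding has_field_derivative_iff slope_def .
qed

lemma f_tendsto_at_right: "a \<le> x \<Longrightarrow> (f \<longlongrightarrow> f x) (at_right x)"
  using continuous unfolding continuous_on_def
  by (auto intro: tendsto_within_subset)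

lemma f_tendsto_at_left: "a < x \<Longrightarrow> (f \<longlongrightarrow> f x) (at_left x)"
  using continuous_on_interior[OF continuous, of x]
  by (auto simp: isCont_def intro: tendsto_within_subset)

lemma tendsto_rderiv_at_right:
  assumes "bdd_above (slope x ` {x<..})" "a \<le> x"
  shows "(rderiv \<longlongrightarrow> rderiv x) (at_right x)"
proof (rule order_tendstoI)
  fix c assume "c < rderiv x"
  then obtain t where t: "x < t" "c < slope x t"
    using less_cSup_iff[OF _ assms(1)] unfolding rderiv_def by auto
  have "((\<lambda>u. slope u t) \<longlongrightarrow> slope x t) (at_right x)"
    unfolding slope_def using t by (intro tendsto_intros f_tendsto_at_right assms) auto
  then have "\<forall>\<^sub>F u in at_right x. c < slope u t"
    using t(2) by (rule order_tendstoD)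
  moreover have "\<forall>\<^sub>F u in at_right x. x < u \<and> u < t"
    unfolding eventually_at_right_field using t(1) by blast
  ultimately show "\<forall>\<^sub>F u in at_right x. c < rderiv u"
    by eventually_elim (use assms(2) slope_le_rderiv[OF bdd_above_slopes] in force)
next
  fix c assume "rderiv x < c"
  then have "rderiv u < c" if "x < u" for u
    using rderiv_antimono[OF assms that] by simp
  then show "\<forall>\<^sub>F u in at_right x. rderiv u < c"
    unfolding eventually_at_right_field by (intro exI[of _ "x + 1"]) auto
qed

lemma tendsto_rderiv_at_left:
  assumes "a < x"
  shows "(rderiv \<longlongrightarrow> lderiv x) (at_left x)"
proof (rule order_tendstoI)
  fix c assume c: "c < lderiv x"
  have "c < rderiv u" if "a < u" "u < x" for u
    using c lderiv_le_rderiv[OF bdd_above_slopes, of u x] that by simp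
  then show "\<forall>\<^sub>F u in at_left x. c < rderiv u"
    unfolding eventually_at_left_field using assms by (intro exI[of _ a]) auto
next
  fix c assume "lderiv x < c"
  then obtain t where t: "a \<le> t" "t < x" "slope t x < c"
    using cInf_less_iff[OF _ bdd_below_slopes] assms unfolding lderiv_def by auto
  have "(slope t \<longlongrightarrow> slope t x) (at_left x)"
    unfolding slope_def using t by (intro tendsto_intros f_tendsto_at_left assms) auto
  then have "\<forall>\<^sub>F u in at_left x. slope t u < c"
    using t(3) by (rule order_tendstoD)
  moreover have "\<forall>\<^sub>F u in at_left x. t < u \<and> u < x"
    unfolding eventually_at_left_field using t(2) by blast
  ultimately show "\<forall>\<^sub>F u in at_left x. rderiv u < c"
  proof eventually_elim
    case (elim u)
    have "rderiv u \<le> lderiv u" using rderiv_le_lderiv[of u] elim t(1) by simp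
    also have "\<dots> \<le> slope t u" using lderiv_le_slope[of t u] elim t(1) by simp
    finally show ?case using elim by simp
  qed
qed

lemma supergradient:
  assumes "a < x" "rderiv x \<le> p" "p \<le> lderiv x" "a \<le> z"
  shows "f z \<le> f x + p * (z - x)"
proof (cases z x rule: linorder_cases)
  case less
  then have "p \<le> slope z x" using lderiv_le_slope[of z x] assms by simp
  then show ?thesis using less by (simp add: slope_def le_divide_eq algebra_simps)
next
  case greater
  then have "slope x z \<le> p" using slope_le_rderiv[OF bdd_above_slopes] assms by force
  then show ?thesis using greater by (simp add: slope_def divide_le_eq algebra_simps)
qed simp

lemma touched_below_imp_rderiv_eq:
  assumes "a < x" "(\<phi> has_real_derivative q) (at x)"
    and "loc_min_rel a (\<lambda>z. f z - \<phi> z) x"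
  shows "rderiv x = q"
proof -
  define dq where "dq z = (\<phi> z - \<phi> x) / (z - x)" for z
  have dq: "(dq \<longlongrightarrow> q) (at_right x)" "(dq \<longlongrightarrow> q) (at_left x)"
    using assms(2) unfolding has_field_derivative_iff dq_def by (auto simp: filterlim_at_split)
  obtain \<delta> where "\<delta> > 0" and \<delta>: "\<And>z. a \<le> z \<Longrightarrow> \<bar>z - x\<bar> < \<delta> \<Longrightarrow> \<phi> z - \<phi> x \<le> f z - f x"
    using assms(3) unfolding loc_min_rel_def by fastforce
  have "dq z \<le> slope x z" if "x < z" "z < x + \<delta>" for z
    using \<delta>[of z] that assms(1) unfolding dq_def slope_def by (simp add: divide_right_mono)
  then have "\<forall>\<^sub>F z in at_right x. dq z \<le> slope x z"
    unfolding eventually_at_right_field using \<open>\<delta> > 0\<close> by (intro exI[of _ "x + \<delta>"]) auto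
  then have "q \<le> rderiv x"
    using tendsto_le[OF _ tendsto_slope_rderiv[OF bdd_above_slopes] dq(1)] assms(1) by simp
  moreover have "slope z x \<le> dq z" if "max a (x - \<delta>) < z" "z < x" for z
  proof -
    have "f x - f z \<le> \<phi> x - \<phi> z" using \<delta>[of z] that by simp
    then have "slope z x \<le> (\<phi> x - \<phi> z) / (x - z)"
      unfolding slope_def using that by (simp add: divide_right_mono)
    then show ?thesis unfolding dq_def by (metis minus_diff_eq minus_divide_divide)
  qed
  then have "\<forall>\<^sub>F z in at_left x. slope z x \<le> dq z"
    unfolding eventually_at_left_field using \<open>\<delta> > 0\<close> assms(1)
    by (intro exI[of _ "max a (x - \<delta>)"]) auto
  then have "lderiv x \<le> q"
    using tendsto_le[OF _ dq(2) tendsto_slope_lderiv] assms(1) by simp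
  ultimately show "rderiv x = q"
    using rderiv_le_lderiv[OF assms(1)] by linarith
qed

end

text \<open>
  \<open>G x p\<close> plays the role of \<open>H(x, y\<^sub>j, p) + \<lambda>\<^sub>j (v\<^sub>\<jmath> x - v\<^sub>j x) - \<rho> v\<^sub>j x\<close>; only
  \<open>p \<ge> 0\<close> matters, as \<open>f\<close> is nondecreasing and \<open>H\<close> is infinite for \<open>p < 0\<close>.
\<close>
locale concave_visc_solution = concave_halfline +
  fixes G :: "real \<Rightarrow> real \<Rightarrow> real"
  assumes G_continuous: "continuous_on ({a<..} \<times> {0..}) (\<lambda>(x, p). G x p)"
    and G_strictly_convex:
      "\<And>x p q. a < x \<Longrightarrow> 0 \<le> p \<Longrightarrow> p < q \<Longrightarrow> 2 * G x ((p + q) / 2) < G x p + G x q"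
    and G_coercive: "\<exists>\<eta>>0. \<exists>q\<^sub>0. \<forall>x\<in>{a<..a + \<eta>}. \<forall>q\<ge>q\<^sub>0. 0 < G x q"
    and subsolution: "\<And>\<phi> x. smooth_fun \<phi> \<Longrightarrow> a < x \<Longrightarrow> 0 \<le> deriv \<phi> x \<Longrightarrow>
      loc_max_rel a (\<lambda>z. f z - \<phi> z) x \<Longrightarrow> 0 \<le> G x (deriv \<phi> x)"
    and supersolution: "\<And>\<phi> x. smooth_fun \<phi> \<Longrightarrow> a < x \<Longrightarrow> 0 \<le> deriv \<phi> x \<Longrightarrow>
      loc_min_rel a (\<lambda>z. f z - \<phi> z) x \<Longrightarrow> G x (deriv \<phi> x) \<le> 0"
begin

lemma exists_G_rderiv_nonpos:
  assumes "a < c" "c < d"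
  shows "\<exists>x\<in>{c<..<d}. G x (rderiv x) \<le> 0"
proof -
  obtain x B C where x: "c < x" "x < d"
    and touch: "\<And>z. z \<in> {c..d} \<Longrightarrow> f x - (B * x + C * x\<^sup>2) \<le> f z - (B * z + C * z\<^sup>2)"
    using exists_quadratic_touching_below[of c d f] continuous_on_subset[OF continuous] assms
    by auto
  define \<phi> where "\<phi> = (\<lambda>z::real. 0 + B * z + C * z\<^sup>2)"
  have min: "loc_min_rel a (\<lambda>z. f z - \<phi> z) x"
    unfolding loc_min_rel_def \<phi>_def using x touch
    by (intro exI[of _ "min (x - c) (d - x)"]) (auto simp: abs_less_iff)
  moreover have "(\<phi> has_real_derivative B + 2 * C * x) (at x)"
    unfolding \<phi>_def by (auto intro!: derivative_eq_intros)
  ultimately have "rderiv x = B + 2 * C * x"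
    using touched_below_imp_rderiv_eq x assms by simp
  moreover have "deriv \<phi> x = B + 2 * C * x"
    unfolding \<phi>_def deriv_quadratic ..
  moreover have "0 \<le> rderiv x"
    using rderiv_nonneg[OF bdd_above_slopes] x assms by simp
  moreover have "smooth_fun \<phi>"
    unfolding \<phi>_def by (rule smooth_fun_quadratic)
  ultimately have "G x (rderiv x) \<le> 0"
    using supersolution[OF _ _ _ min] x assms by simp
  then show ?thesis using x by auto
qed

lemma frequently_G_rderiv_nonpos_at_right:
  assumes "a \<le> x" shows "\<exists>\<^sub>F z in at_right x. G z (rderiv z) \<le> 0"
  unfolding frequently_def eventually_at_right_field
proof
  assume "\<exists>b>x. \<forall>z>x. z < b \<longrightarrow> \<not> G z (rderiv z) \<le> 0"
  then obtain b where "x < b" "\<And>z. x < z \<Longrightarrow> z < b \<Longrightarrow> \<not> G z (rderiv z) \<le> 0" by blast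
  then show False
    using exists_G_rderiv_nonpos[of "(x + b) / 2" b] assms by auto
qed

lemma frequently_G_rderiv_nonpos_at_left:
  assumes "a < x" shows "\<exists>\<^sub>F z in at_left x. G z (rderiv z) \<le> 0"
  unfolding frequently_def eventually_at_left_field
proof
  assume "\<exists>b<x. \<forall>z>b. z < x \<longrightarrow> \<not> G z (rderiv z) \<le> 0"
  then obtain b where "b < x" and pos: "\<And>z. b < z \<Longrightarrow> z < x \<Longrightarrow> \<not> G z (rderiv z) \<le> 0"
    by blast
  define c where "c = (max a b + x) / 2"
  have "a < c" "b < c" "c < x" using assms \<open>b < x\<close> by (auto simp: c_def)
  then show False
    using exists_G_rderiv_nonpos[of c x] pos by force
qed

lemma G_nonpos_at_limit:
  assumes "a < x" "((\<lambda>z. z) \<longlongrightarrow> x) F" "(rderiv \<longlongrightarrow> p) F"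
    and "\<exists>\<^sub>F z in F. G z (rderiv z) \<le> 0"
  shows "G x p \<le> 0"
proof (rule ccontr)
  have "F \<noteq> bot" using assms(4) unfolding frequently_def by auto
  have right: "\<forall>\<^sub>F z in F. a < z" using order_tendstoD(1)[OF assms(2,1)] .
  then have nonneg: "\<forall>\<^sub>F z in F. 0 \<le> rderiv z"
    by eventually_elim (simp add: rderiv_nonneg[OF bdd_above_slopes])
  then have "0 \<le> p" using tendsto_lowerbound[OF assms(3) _ \<open>F \<noteq> bot\<close>] by simp
  from right nonneg have "\<forall>\<^sub>F z in F. (z, rderiv z) \<in> {a<..} \<times> {0..}"
    by eventually_elim simp
  then have "((\<lambda>z. G z (rderiv z)) \<longlongrightarrow> G x p) F"
    using continuous_on_tendsto_compose[OF G_continuous tendsto_Pair[OF assms(2,3)]]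
      assms(1) \<open>0 \<le> p\<close> by simp
  moreover assume "\<not> G x p \<le> 0"
  ultimately have "\<forall>\<^sub>F z in F. 0 < G z (rderiv z)"
    by (intro order_tendstoD(1)) auto
  then show False using assms(4) unfolding frequently_def by (simp add: eventually_mono not_le)
qed

lemma G_rderiv_nonpos: "a < x \<Longrightarrow> G x (rderiv x) \<le> 0"
  using G_nonpos_at_limit[OF _ _ tendsto_rderiv_at_right[OF bdd_above_slopes]]
    frequently_G_rderiv_nonpos_at_right by simp

lemma G_lderiv_nonpos: "a < x \<Longrightarrow> G x (lderiv x) \<le> 0"
  using G_nonpos_at_limit[OF _ _ tendsto_rderiv_at_left] frequently_G_rderiv_nonpos_at_left
  by simp

lemma rderiv_eq_lderiv:
  assumes "a < x" shows "rderiv x = lderiv x"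
proof (rule ccontr)
  assume "rderiv x \<noteq> lderiv x"
  then have less: "rderiv x < lderiv x" using rderiv_le_lderiv[OF assms] by simp
  define p where "p = (rderiv x + lderiv x) / 2"
  define \<phi> where "\<phi> = (\<lambda>z::real. (f x - p * x) + p * z + 0 * z\<^sup>2)"
  have p: "rderiv x \<le> p" "p \<le> lderiv x" using less by (simp_all add: p_def)
  have "f z - \<phi> z \<le> f x - \<phi> x" if "a \<le> z" for z
    using supergradient[OF assms p that] by (simp add: \<phi>_def algebra_simps)
  then have max: "loc_max_rel a (\<lambda>z. f z - \<phi> z) x"
    unfolding loc_max_rel_def by (intro exI[of _ 1]) auto
  have "smooth_fun \<phi>" unfolding \<phi>_def by (rule smooth_fun_quadratic)
  moreover have "deriv \<phi> x = p" unfolding \<phi>_def deriv_quadratic by simp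
  moreover have "0 \<le> p"
    using rderiv_nonneg[OF bdd_above_slopes] assms p by force
  ultimately have "0 \<le> G x p"
    using subsolution[OF _ assms _ max] by simp
  moreover have "2 * G x p < G x (rderiv x) + G x (lderiv x)"
    using G_strictly_convex[OF assms _ less] rderiv_nonneg[OF bdd_above_slopes] assms
    by (simp add: p_def)
  ultimately show False using G_rderiv_nonpos[OF assms] G_lderiv_nonpos[OF assms] by simp
qed

lemma rderiv_bounded: "\<exists>L. \<forall>x>a. rderiv x \<le> L"
proof -
  obtain \<eta> q\<^sub>0 where "\<eta> > 0" and q\<^sub>0: "\<And>x q. x \<in> {a<..a + \<eta>} \<Longrightarrow> q\<^sub>0 \<le> q \<Longrightarrow> 0 < G x q"
    using G_coercive by blast
  have "rderiv x \<le> q\<^sub>0" if "a < x" for x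
  proof -
    define m where "m = min x (a + \<eta>)"
    have m: "a < m" "m \<le> x" "m \<le> a + \<eta>" using that \<open>\<eta> > 0\<close> by (simp_all add: m_def)
    obtain z where z: "(a + m) / 2 < z" "z < m" "G z (rderiv z) \<le> 0"
      using exists_G_rderiv_nonpos[of "(a + m) / 2" m] m by auto
    then have "rderiv z < q\<^sub>0"
      using q\<^sub>0[of z "rderiv z"] m by force
    moreover have "rderiv x \<le> rderiv z"
      using rderiv_antimono[OF bdd_above_slopes] z m by simp
    ultimately show ?thesis by simp
  qed
  then show ?thesis by blast
qed

lemma bdd_above_slopes_at_boundary: "bdd_above (slope a ` {a<..})"
proof -
  obtain L where L: "\<And>x. a < x \<Longrightarrow> rderiv x \<le> L" using rderiv_bounded by blast
  have "slope a t \<le> L" if "a < t" for t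
  proof -
    have "((\<lambda>z. slope z t) \<longlongrightarrow> slope a t) (at_right a)"
      unfolding slope_def using that by (intro tendsto_intros f_tendsto_at_right) auto
    moreover have "\<forall>\<^sub>F z in at_right a. slope z t \<le> L"
      unfolding eventually_at_right_field using that
      by (intro exI[of _ t])
         (auto intro: order.trans[OF slope_le_rderiv[OF bdd_above_slopes] L])
    ultimately show ?thesis by (rule tendsto_upperbound) simp
  qed
  then show ?thesis by (intro bdd_aboveI2) auto
qed

lemma f_has_real_derivative: "a < x \<Longrightarrow> (f has_real_derivative rderiv x) (at x)"
  using has_real_derivative_rderiv rderiv_eq_lderiv by simp

lemma continuous_on_rderiv: "continuous_on {a..} rderiv"
  unfolding continuous_on_def
proof
  fix x assume "x \<in> {a..}"
  show "(rderiv \<longlongrightarrow> rderiv x) (at x within {a..})"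
  proof (cases "x = a")
    case True
    then show ?thesis
      using tendsto_rderiv_at_right[OF bdd_above_slopes_at_boundary] by (simp add: at_within_Ici_at_right)
  next
    case False
    then have "a < x" using \<open>x \<in> {a..}\<close> by simp
    then have "(rderiv \<longlongrightarrow> rderiv x) (at x)"
      using tendsto_rderiv_at_left tendsto_rderiv_at_right[OF bdd_above_slopes] rderiv_eq_lderiv
      by (simp add: filterlim_at_split)
    then show ?thesis by (rule tendsto_within_subset) simp
  qed
qed

lemma C1_up_to_boundary:
  "(\<forall>x>a. f differentiable (at x)) \<and> continuous_on {a<..} (deriv f) \<and>
    (\<exists>L. ((\<lambda>e. (f (a + e) - f a) / e) \<longlongrightarrow> L) (at_right 0) \<and>
       (\<forall>R>a. uniformly_continuous_on {a..R} (\<lambda>x. if x = a then L else deriv f x)))"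
proof (intro conjI allI impI exI[of _ "rderiv a"])
  have deriv: "deriv f x = rderiv x" if "a < x" for x
    using f_has_real_derivative[OF that] by (rule DERIV_imp_deriv)
  show "f differentiable (at x)" if "a < x" for x
    using f_has_real_derivative[OF that] real_differentiable_def by blast
  have "continuous_on {a<..} rderiv"
    by (rule continuous_on_subset[OF continuous_on_rderiv]) auto
  then show "continuous_on {a<..} (deriv f)"
    by (rule continuous_on_eq) (simp add: deriv)
  have "continuous_on {a..R} rderiv" for R
    by (rule continuous_on_subset[OF continuous_on_rderiv]) auto
  then have "continuous_on {a..R} (\<lambda>x. if x = a then rderiv a else deriv f x)" for R
    by (rule continuous_on_eq) (auto simp: deriv)
  then show "uniformly_continuous_on {a..R} (\<lambda>x. if x = a then rderiv a else deriv f x)" for R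
    by (rule compact_uniformly_continuous) simp
  have "(slope a \<longlongrightarrow> rderiv a) (at_right a)"
    using tendsto_slope_rderiv[OF bdd_above_slopes_at_boundary] by simp
  then show "((\<lambda>e. (f (a + e) - f a) / e) \<longlongrightarrow> rderiv a) (at_right 0)"
    unfolding filterlim_at_right_to_0[of _ _ a] by (simp add: slope_def add.commute)
qed

end

lemma linear_dominates_powr:
  fixes \<kappa> k \<alpha> :: real
  assumes "0 < \<kappa>" "\<alpha> < 1"
  shows "filterlim (\<lambda>q. \<kappa> * q + k * q powr \<alpha>) at_top at_top"
  using assms by real_asymp

definition hjb_residual ::
  "real \<Rightarrow> real \<Rightarrow> real \<Rightarrow> (nat \<Rightarrow> real) \<Rightarrow> (nat \<Rightarrow> real) \<Rightarrow> (nat \<Rightarrow> real \<Rightarrow> real)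
   \<Rightarrow> nat \<Rightarrow> real \<Rightarrow> real \<Rightarrow> real" where
  "hjb_residual \<rho> r \<gamma> y lam v j x p =
     (r * x + y j) * p + \<gamma> / (1 - \<gamma>) * p powr (1 - 1 / \<gamma>)
     + lam j * (v (3 - j) x - v j x) - \<rho> * v j x"

lemma Ham_plus_switching_eq:
  "0 \<le> p \<Longrightarrow> Ham r \<gamma> x (y j) p + ereal (lam j * (v (3 - j) x - v j x)) =
     ereal (\<rho> * v j x + hjb_residual \<rho> r \<gamma> y lam v j x p)"
  by (simp add: Ham_def hjb_residual_def)

lemma hjb_residual_strictly_convex:
  assumes "\<gamma> > 1" "0 \<le> p" "p < q"
  shows "2 * hjb_residual \<rho> r \<gamma> y lam v j x ((p + q) / 2) <
    hjb_residual \<rho> r \<gamma> y lam v j x p + hjb_residual \<rho> r \<gamma> y lam v j x q"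
proof -
  have "\<gamma> / (1 - \<gamma>) * (2 * ((p + q) / 2) powr (1 - 1 / \<gamma>)) <
      \<gamma> / (1 - \<gamma>) * (p powr (1 - 1 / \<gamma>) + q powr (1 - 1 / \<gamma>))"
    using powr_midpoint_strict[of p q "1 - 1 / \<gamma>"] assms
    by (intro mult_strict_left_mono_neg) (auto simp: divide_pos_neg)
  then show ?thesis by (simp add: hjb_residual_def algebra_simps add_divide_distrib)
qed

lemma coupling_term_lower_bound:
  fixes v :: "nat \<Rightarrow> real \<Rightarrow> real"
  assumes "bounded (v j ` {xl..})" "bounded (v (3 - j) ` {xl..})"
  obtains Cb where "\<And>x. xl \<le> x \<Longrightarrow> - Cb \<le> lam j * (v (3 - j) x - v j x) - \<rho> * v j x"
proof -
  obtain M M' where M: "\<And>x. xl \<le> x \<Longrightarrow> \<bar>v j x\<bar> \<le> M" and M': "\<And>x. xl \<le> x \<Longrightarrow> \<bar>v (3 - j) x\<bar> \<le> M'"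
    using assms unfolding bounded_iff by (auto simp: real_norm_def)
  have "- (\<bar>lam j\<bar> * (M' + M) + \<bar>\<rho>\<bar> * M) \<le> lam j * (v (3 - j) x - v j x) - \<rho> * v j x"
    if "xl \<le> x" for x
  proof -
    have "\<bar>lam j * (v (3 - j) x - v j x) - \<rho> * v j x\<bar> \<le> \<bar>lam j\<bar> * \<bar>v (3 - j) x - v j x\<bar> + \<bar>\<rho>\<bar> * \<bar>v j x\<bar>"
      by (simp add: abs_mult[symmetric] abs_triangle_ineq4)
    also have "\<dots> \<le> \<bar>lam j\<bar> * (M' + M) + \<bar>\<rho>\<bar> * M"
      using M[OF that] M'[OF that] by (intro add_mono mult_left_mono) auto
    finally show ?thesis by linarith
  qed
  then show ?thesis using that by blast
qed

lemma hjb_residual_coercive: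
  assumes "\<gamma> > 1" "r * xl + y j > 0"
    and "bounded (v j ` {xl..})" "bounded (v (3 - j) ` {xl..})"
  shows "\<exists>\<eta>>0. \<exists>q\<^sub>0. \<forall>x\<in>{xl<..xl + \<eta>}. \<forall>q\<ge>q\<^sub>0. 0 < hjb_residual \<rho> r \<gamma> y lam v j x q"
proof -
  obtain Cb where Cb: "\<And>x. xl \<le> x \<Longrightarrow> - Cb \<le> lam j * (v (3 - j) x - v j x) - \<rho> * v j x"
    using coupling_term_lower_bound[OF assms(3,4)] by blast
  define \<kappa> where "\<kappa> = (r * xl + y j) / 2"
  define \<eta> where "\<eta> = \<kappa> / (\<bar>r\<bar> + 1)"
  have "0 < \<kappa>" "0 < \<eta>" using assms(2) by (simp_all add: \<kappa>_def \<eta>_def)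
  have drift: "\<kappa> \<le> r * x + y j" if "xl \<le> x" "x \<le> xl + \<eta>" for x
  proof -
    have "\<bar>r\<bar> * (x - xl) \<le> (\<bar>r\<bar> + 1) * \<eta>"
      using that \<open>0 < \<eta>\<close> by (intro mult_mono) auto
    also have "\<dots> = \<kappa>" using \<open>0 < \<kappa>\<close> by (simp add: \<eta>_def)
    finally have "- \<kappa> \<le> r * (x - xl)"
      using abs_ge_minus_self[of "r * (x - xl)"] that by (simp add: abs_mult)
    moreover have "r * x + y j = 2 * \<kappa> + r * (x - xl)" by (simp add: \<kappa>_def algebra_simps)
    ultimately show ?thesis by linarith
  qed
  define k where "k = \<gamma> / (1 - \<gamma>)"
  define \<alpha> where "\<alpha> = 1 - 1 / \<gamma>"
  have "\<forall>\<^sub>F q in at_top. Cb < \<kappa> * q + k * q powr \<alpha>"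
    using linear_dominates_powr[OF \<open>0 < \<kappa>\<close>, of \<alpha> k] assms(1)
    by (simp add: \<alpha>_def filterlim_at_top_dense)
  moreover have "\<forall>\<^sub>F q in at_top. (0::real) \<le> q" by (rule eventually_ge_at_top)
  ultimately have "\<forall>\<^sub>F q in at_top. Cb < \<kappa> * q + k * q powr \<alpha> \<and> 0 \<le> q"
    by (rule eventually_conj)
  then obtain q\<^sub>0 where q\<^sub>0: "\<And>q. q\<^sub>0 \<le> q \<Longrightarrow> Cb < \<kappa> * q + k * q powr \<alpha> \<and> 0 \<le> q"
    unfolding eventually_at_top_linorder by blast
  have "0 < hjb_residual \<rho> r \<gamma> y lam v j x q" if "x \<in> {xl<..xl + \<eta>}" "q\<^sub>0 \<le> q" for x q
  proof -
    have "\<kappa> * q \<le> (r * x + y j) * q" using drift[of x] q\<^sub>0[OF that(2)] that(1)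
      by (intro mult_right_mono) auto
    then show ?thesis
      using q\<^sub>0[OF that(2)] Cb[of x] that(1) by (simp add: hjb_residual_def k_def \<alpha>_def)
  qed
  then show ?thesis using \<open>0 < \<eta>\<close> by blast
qed

lemma continuous_on_hjb_residual:
  assumes "\<gamma> > 1" "continuous_on {xl..} (v j)" "continuous_on {xl..} (v (3 - j))"
  shows "continuous_on ({xl<..} \<times> {0..}) (\<lambda>(x, p). hjb_residual \<rho> r \<gamma> y lam v j x p)"
proof -
  have "continuous_on ({xl<..} \<times> {0..}) (\<lambda>z. v i (fst z))" if "continuous_on {xl..} (v i)" for i
    by (rule continuous_on_compose2[OF that continuous_on_fst]) auto
  note v_fst = this[OF assms(2)] this[OF assms(3)]
  have "continuous_on ({xl<..} \<times> {0..}) (\<lambda>z. snd z powr (1 - 1 / \<gamma>))"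
    using assms(1) by (intro continuous_on_powr' continuous_on_snd continuous_on_id continuous_on_const) auto
  then show ?thesis
    unfolding hjb_residual_def case_prod_beta
    by (intro continuous_on_add continuous_on_diff continuous_on_mult continuous_on_const
        continuous_on_fst continuous_on_snd continuous_on_id v_fst)
qed

lemma constrained_visc_sol_component:
  assumes "r < \<rho>" "\<gamma> > 1" "xl \<le> 0" "\<rho> * xl + y j > 0" "j \<in> {1, 2}"
    and sol: "constrained_visc_sol \<rho> r \<gamma> y lam xl v"
    and bdd: "\<forall>j\<in>{1,2}. bounded (v j ` {xl..})"
    and concave: "\<forall>j\<in>{1,2}. concave_on {xl..} (v j)"
  shows "concave_visc_solution xl (v j) (hjb_residual \<rho> r \<gamma> y lam v j)"
proof unfold_locales
  have "3 - j \<in> {1, 2}" using assms(5) by auto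
  have bdd_j: "bounded (v j ` {xl..})" "bounded (v (3 - j) ` {xl..})"
    using bdd assms(5) \<open>3 - j \<in> {1, 2}\<close> by blast+
  have cont: "continuous_on {xl..} (v j)" "continuous_on {xl..} (v (3 - j))"
    using sol assms(5) \<open>3 - j \<in> {1, 2}\<close> unfolding constrained_visc_sol_def by auto
  show "concave_on {xl..} (v j)" "continuous_on {xl..} (v j)" "bounded (v j ` {xl..})"
    using concave cont bdd_j assms(5) by auto
  show "continuous_on ({xl<..} \<times> {0..}) (\<lambda>(x, p). hjb_residual \<rho> r \<gamma> y lam v j x p)"
    by (rule continuous_on_hjb_residual[OF assms(2) cont])
  show "2 * hjb_residual \<rho> r \<gamma> y lam v j x ((p + q) / 2) <
      hjb_residual \<rho> r \<gamma> y lam v j x p + hjb_residual \<rho> r \<gamma> y lam v j x q"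
    if "0 \<le> p" "p < q" for x p q
    using hjb_residual_strictly_convex assms(2) that by blast
  have "(\<rho> - r) * xl \<le> 0" using assms(1,3) by (simp add: mult_nonneg_nonpos)
  then have "r * xl + y j > 0" using assms(4) by (simp add: algebra_simps)
  then show "\<exists>\<eta>>0. \<exists>q\<^sub>0. \<forall>x\<in>{xl<..xl + \<eta>}. \<forall>q\<ge>q\<^sub>0. 0 < hjb_residual \<rho> r \<gamma> y lam v j x q"
    by (rule hjb_residual_coercive[OF assms(2) _ bdd_j])
next
  fix \<phi> x assume "smooth_fun \<phi>" "xl < x" "0 \<le> deriv \<phi> x" "loc_max_rel xl (\<lambda>z. v j z - \<phi> z) x"
  then have "ereal (\<rho> * v j x) \<le> ereal (\<rho> * v j x + hjb_residual \<rho> r \<gamma> y lam v j x (deriv \<phi> x))"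
    using sol assms(5) unfolding constrained_visc_sol_def visc_sub_def
    by (auto simp flip: Ham_plus_switching_eq)
  then show "0 \<le> hjb_residual \<rho> r \<gamma> y lam v j x (deriv \<phi> x)" by simp
next
  fix \<phi> x assume "smooth_fun \<phi>" "xl < x" "0 \<le> deriv \<phi> x" "loc_min_rel xl (\<lambda>z. v j z - \<phi> z) x"
  then have "ereal (\<rho> * v j x + hjb_residual \<rho> r \<gamma> y lam v j x (deriv \<phi> x)) \<le> ereal (\<rho> * v j x)"
    using sol assms(5) unfolding constrained_visc_sol_def visc_super_def
    by (auto simp flip: Ham_plus_switching_eq)
  then show "hjb_residual \<rho> r \<gamma> y lam v j x (deriv \<phi> x) \<le> 0" by simp
qed

theorem mainTheorem8:
  fixes \<rho> r \<gamma> xl :: real and y lam :: "nat \<Rightarrow> real" and v :: "nat \<Rightarrow> real \<Rightarrow> real"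
  assumes "\<rho> > 0" and "r < \<rho>" and "0 < y 1" and "y 1 < y 2" and "\<gamma> > 1"
    and "xl \<le> 0" and "\<rho> * xl + y 1 > 0" and "\<rho> * xl + y 2 > 0"
    and "lam 1 \<ge> 0" and "lam 2 \<ge> 0"
    and "constrained_visc_sol \<rho> r \<gamma> y lam xl v"
    and "\<forall>j\<in>{1,2}. bounded (v j ` {xl..})"
    and "\<forall>j\<in>{1,2}. concave_on {xl..} (v j)"
  shows "\<forall>j\<in>{1::nat,2}.
           (\<forall>x>xl. v j differentiable (at x)) \<and>
           continuous_on {xl<..} (deriv (v j)) \<and>
           (\<exists>L. ((\<lambda>e. (v j (xl + e) - v j xl) / e) \<longlongrightarrow> L) (at_right 0) \<and>
                (\<forall>R>xl. uniformly_continuous_on {xl..R}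
                          (\<lambda>x. if x = xl then L else deriv (v j) x)))"
proof -
  have "\<forall>j\<in>{1::nat, 2}. concave_visc_solution xl (v j) (hjb_residual \<rho> r \<gamma> y lam v j)"
    using constrained_visc_sol_component[OF assms(2,5,6) _ _ assms(11-13)] assms(7,8) by auto
  then show ?thesis using concave_visc_solution.C1_up_to_boundary by blast
qed

end
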